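(* Let $k>1$ and $1\le\gamma<k$. Consider instances $\mathcal{I}_{m,\mathcal{A}_n,k}$ whose users are partitioned into $\gamma$ groups $G_1,\dots,G_\gamma$ each of which is cohesive. For any scoring rule $f$, the price of justified representation over such instances satisfies $P(k,f)\le\frac{k}{k-\gamma}$, and this holds with equality for certain scoring rules, such as maximin diverse approval $f_{DA}$.
   Context: An instance $\mathcal{I}_{m,\mathcal{A}_n,k}=\langle m,\mathcal{A}_n,k\rangle$ consists of items $[m]$, users $[n]$, an approval profile $\mathcal{A}_n=(A_1,\dots,A_n)$ with $A_u\subseteq[m]$, and a target size $k\le m$. A scoring rule assigns each item a score $f(i,\mathcal{A}_n)\ge0$, additive over sets: $f(S)=\sum_{i\in S}f(i,\mathcal{A}_n)$. A group $G\subseteq[n]$ is cohesive if $\bigcap_{u\in G}A_u\ne\emptyset$; $S$ represents $G$ if some $u\in G$ has $A_u\cap S\ne\emptyset$; $S$ satisfies justified representation (JR) if $|S|=k$ and $S$ represents every cohesive group of at least $n/k$ users. $S^*$ maximizes $f(S)$ over all $S\subseteq[m]$ with $|S|=k$; $S^*_{JR}$ maximizes $f(S)$ over sets satisfying JR. The price of JR on an instance is $P(\mathcal{I}_{m,\mathcal{A}_n,k},f)=f(S^* )/f(S^*_{JR})$, and $P(k,f)$ is its maximum over the instances considered. Maximin diverse approval with respect to groups $G_1,\dots,G_\gamma$ is $f_{DA}(i,\mathcal{A}_n)=\min_{g\in[\gamma]}\frac{1}{|G_g|}|\{u\in G_g:i\in A_u\}|$. *)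

theory Defs
  imports Complex_Main
begin

text \<open>Conventions (0-based): items are {..<m}, users are {..<n}, groups are
  indexed by {..<gamma}. A profile is A :: nat => nat set (A u = approval set of user u),
  a grouping is G :: nat => nat set (G g = set of users of group g).
  A scoring rule is a function of the whole instance (m, n, A, G) and an item.\<close>

definition cohesive :: "(nat \<Rightarrow> nat set) \<Rightarrow> nat set \<Rightarrow> bool" where
  "cohesive A Gr \<longleftrightarrow> (\<Inter>u\<in>Gr. A u) \<noteq> {}"

definition represents :: "(nat \<Rightarrow> nat set) \<Rightarrow> nat set \<Rightarrow> nat set \<Rightarrow> bool" where
  "represents A S Gr \<longleftrightarrow> (\<exists>u\<in>Gr. A u \<inter> S \<noteq> {})"

definition satisfies_JR :: "nat \<Rightarrow> nat \<Rightarrow> (nat \<Rightarrow> nat set) \<Rightarrow> nat \<Rightarrow> nat set \<Rightarrow> bool" where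
  "satisfies_JR m n A k S \<longleftrightarrow> S \<subseteq> {..<m} \<and> card S = k \<and>
     (\<forall>Gr. Gr \<subseteq> {..<n} \<and> cohesive A Gr \<and> real (card Gr) \<ge> real n / real k
        \<longrightarrow> represents A S Gr)"

definition set_score :: "(nat \<Rightarrow> real) \<Rightarrow> nat set \<Rightarrow> real" where
  "set_score sc S = (\<Sum>i\<in>S. sc i)"

definition opt_value :: "(nat \<Rightarrow> real) \<Rightarrow> nat \<Rightarrow> nat \<Rightarrow> real" where
  "opt_value sc m k = Max {set_score sc S | S. S \<subseteq> {..<m} \<and> card S = k}"

definition opt_JR_value :: "(nat \<Rightarrow> real) \<Rightarrow> nat \<Rightarrow> nat \<Rightarrow> (nat \<Rightarrow> nat set) \<Rightarrow> nat \<Rightarrow> real" where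
  "opt_JR_value sc m n A k = Max {set_score sc S | S. satisfies_JR m n A k S}"

definition price_inst :: "(nat \<Rightarrow> real) \<Rightarrow> nat \<Rightarrow> nat \<Rightarrow> (nat \<Rightarrow> nat set) \<Rightarrow> nat \<Rightarrow> real" where
  "price_inst sc m n A k = opt_value sc m k / opt_JR_value sc m n A k"

definition grouped_instance ::
  "nat \<Rightarrow> nat \<Rightarrow> nat \<Rightarrow> nat \<Rightarrow> (nat \<Rightarrow> nat set) \<Rightarrow> (nat \<Rightarrow> nat set) \<Rightarrow> bool" where
  "grouped_instance gamma k m n A G \<longleftrightarrow>
     k \<le> m \<and> (\<forall>u<n. A u \<subseteq> {..<m}) \<and>
     (\<forall>g<gamma. G g \<noteq> {} \<and> cohesive A (G g)) \<and>
     (\<forall>g<gamma. \<forall>h<gamma. g \<noteq> h \<longrightarrow> G g \<inter> G h = {}) \<and>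
     (\<Union>g<gamma. G g) = {..<n}"

type_synonym scoring_rule = "nat \<Rightarrow> nat \<Rightarrow> (nat \<Rightarrow> nat set) \<Rightarrow> (nat \<Rightarrow> nat set) \<Rightarrow> nat \<Rightarrow> real"

definition scoring_rule :: "scoring_rule \<Rightarrow> bool" where
  "scoring_rule f \<longleftrightarrow> (\<forall>m n A G i. f m n A G i \<ge> 0)"

definition price_k :: "nat \<Rightarrow> nat \<Rightarrow> scoring_rule \<Rightarrow> real" where
  "price_k gamma k f = Sup {price_inst (f m n A G) m n A k | m n A G.
                              grouped_instance gamma k m n A G}"

definition f_DA :: "nat \<Rightarrow> scoring_rule" where
  "f_DA gamma m n A G i =
     Min ((\<lambda>g. real (card {u\<in>G g. i \<in> A u}) / real (card (G g))) ` {..<gamma})"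

end

theory Submission
  imports Defs
begin

text \<open>Upper bound: let \<open>S\<^sup>*\<close> be optimal and pick one item \<open>c\<^sub>g\<close> approved by all of group \<open>g\<close>.
  Dropping the \<open>\<gamma>\<close> lowest-scoring items of \<open>S\<^sup>*\<close> keeps at least a \<open>(k - \<gamma>)/k\<close> fraction of
  its score; adding the \<open>c\<^sub>g\<close> and padding to size \<open>k\<close> gives a committee in which every user
  approves a member, which therefore satisfies JR.
  Lower bound: take \<open>k\<close> items of score \<open>c > 0\<close> and \<open>\<gamma>\<close> items of score \<open>0\<close>, each zero item being
  the only approved item of a cohesive set of \<open>n/k\<close> users. JR forces all zero items into the
  committee, so \<open>f(S\<^sup>*\<^sub>J\<^sub>R) = (k - \<gamma>) c\<close> while \<open>f(S\<^sup>*) = k c\<close>. For the rule scoring the first \<open>k\<close>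
  items \<open>1\<close>, the singleton groups \<open>A\<^sub>u = {k + u}\<close> do this. For \<open>f\<^sub>D\<^sub>A\<close> take \<open>\<gamma>\<close> groups of \<open>k\<close> users,
  where \<open>\<gamma>\<close> members of group \<open>h\<close> approve only \<open>k + h\<close> and the others also every item below \<open>k\<close>:
  each item below \<open>k\<close> then scores \<open>(k - \<gamma>)/k\<close>, and \<open>k + h\<close> scores \<open>0\<close> because for \<open>\<gamma> \<ge> 2\<close>
  some other group does not approve it.\<close>

lemma obtain_Diff_singleton_sum_ge:
  fixes f :: "'a \<Rightarrow> real"
  assumes "finite Y" "Y \<noteq> {}"
  obtains y where "y \<in> Y" "real (card Y - 1) * sum f Y \<le> real (card Y) * sum f (Y - {y})"
proof -
  have "Min (f ` Y) \<in> f ` Y"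
    using assms by simp
  then obtain y where y: "y \<in> Y" "f y = Min (f ` Y)"
    by (metis imageE)
  have "real (card Y - 1) * sum f Y = real (card Y) * sum f Y - sum f Y"
    using assms by (simp add: Suc_leI card_gt_0_iff of_nat_diff left_diff_distrib)
  also have "\<dots> \<le> real (card Y) * sum f Y - real (card Y) * f y"
    using sum_bounded_below[of Y "f y" f] y assms(1) by simp
  also have "\<dots> = real (card Y) * sum f (Y - {y})"
    using y(1) assms(1) by (simp add: sum_diff1 right_diff_distrib)
  finally show thesis
    by (rule that[OF y(1)])
qed

lemma exists_subset_card_sum_ge:
  fixes f :: "'a \<Rightarrow> real"
  assumes "finite X" "j \<le> card X"
  shows "\<exists>Y\<subseteq>X. card Y = j \<and> real j * sum f X \<le> real (card X) * sum f Y"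
  using assms(2)
proof (induction j rule: inc_induct)
  case base
  show ?case by blast
next
  case (step j)
  then obtain Y where Y: "Y \<subseteq> X" "card Y = Suc j"
      and mean_Y: "real (Suc j) * sum f X \<le> real (card X) * sum f Y"
    by blast
  have "finite Y" "Y \<noteq> {}"
    using Y assms(1) finite_subset by auto
  then obtain y where "y \<in> Y" and mean_y: "real j * sum f Y \<le> real (Suc j) * sum f (Y - {y})"
    using obtain_Diff_singleton_sum_ge Y(2) by (metis diff_Suc_1)
  have "real (Suc j) * (real j * sum f X) = real j * (real (Suc j) * sum f X)"
    by simp
  also have "\<dots> \<le> real (card X) * (real j * sum f Y)"
    using mult_left_mono[OF mean_Y, of "real j"] by (simp add: mult.left_commute)
  also have "\<dots> \<le> real (Suc j) * (real (card X) * sum f (Y - {y}))"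
    using mult_left_mono[OF mean_y, of "real (card X)"] by (simp add: mult.left_commute)
  finally have "real j * sum f X \<le> real (card X) * sum f (Y - {y})"
    by (simp only: mult_le_cancel_left_pos of_nat_0_less_iff zero_less_Suc)
  moreover have "card (Y - {y}) = j"
    using \<open>y \<in> Y\<close> Y(2) by simp
  ultimately show ?case
    using Y(1) by blast
qed

lemma finite_set_scores:
  assumes "\<And>S. P S \<Longrightarrow> S \<subseteq> {..<m}"
  shows "finite {set_score sc S | S. P S}"
proof (rule finite_subset)
  show "{set_score sc S | S. P S} \<subseteq> set_score sc ` Pow {..<m}"
    using assms by blast
qed simp

lemma opt_value_ge:
  assumes "S \<subseteq> {..<m}" "card S = k"
  shows "set_score sc S \<le> opt_value sc m k"
  unfolding opt_value_def using assms by (intro Max_ge finite_set_scores) auto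

lemma opt_value_attained:
  assumes "k \<le> m"
  obtains S where "S \<subseteq> {..<m}" "card S = k" "opt_value sc m k = set_score sc S"
proof -
  let ?V = "{set_score sc S | S. S \<subseteq> {..<m} \<and> card S = k}"
  obtain S where "S \<subseteq> {..<m}" "card S = k"
    using obtain_subset_with_card_n[of k "{..<m}"] assms by auto
  then have "?V \<noteq> {}" by blast
  then have "Max ?V \<in> ?V"
    by (intro Max_in finite_set_scores) auto
  then show thesis
    using that unfolding opt_value_def by auto
qed

lemma opt_JR_value_ge:
  assumes "satisfies_JR m n A k T"
  shows "set_score sc T \<le> opt_JR_value sc m n A k"
  unfolding opt_JR_value_def using assms
  by (intro Max_ge finite_set_scores) (auto simp: satisfies_JR_def)

lemma opt_JR_value_eqI:
  assumes "satisfies_JR m n A k T"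
    and "\<And>S. satisfies_JR m n A k S \<Longrightarrow> set_score sc S \<le> set_score sc T"
  shows "opt_JR_value sc m n A k = set_score sc T"
  unfolding opt_JR_value_def using assms
  by (intro Max_eqI finite_set_scores) (auto simp: satisfies_JR_def)

lemma satisfies_JR_if_meets_all_users:
  assumes "0 < n" "0 < k" "T \<subseteq> {..<m}" "card T = k"
    and "\<And>u. u < n \<Longrightarrow> A u \<inter> T \<noteq> {}"
  shows "satisfies_JR m n A k T"
  unfolding satisfies_JR_def represents_def
proof (intro conjI allI impI)
  fix Gr
  assume Gr: "Gr \<subseteq> {..<n} \<and> cohesive A Gr \<and> real n / real k \<le> real (card Gr)"
  \<comment> \<open>without \<open>0 < n / k\<close> the empty group, which is cohesive, would have to be represented\<close>
  have "0 < real n / real k"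
    using assms(1,2) by simp
  then have "Gr \<noteq> {}"
    using Gr by auto
  then obtain u where "u \<in> Gr" by blast
  then show "\<exists>u\<in>Gr. A u \<inter> T \<noteq> {}"
    using Gr assms(5) by blast
qed (use assms in auto)

lemma satisfies_JR_contains_sole_approved_item:
  assumes "satisfies_JR m n A k T"
    and "Gr \<subseteq> {..<n}" "cohesive A Gr" "real n / real k \<le> real (card Gr)"
    and "\<And>u. u \<in> Gr \<Longrightarrow> A u \<subseteq> {x}"
  shows "x \<in> T"
  using assms unfolding satisfies_JR_def represents_def by blast

lemma grouped_instance_users_nonempty:
  assumes "grouped_instance \<gamma> k m n A G" "0 < \<gamma>"
  shows "0 < n"
proof -
  from assms have "G 0 \<noteq> {}" "(\<Union>g<\<gamma>. G g) = {..<n}"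
    unfolding grouped_instance_def by simp_all
  then have "G 0 \<subseteq> {..<n}"
    using assms(2) by blast
  with \<open>G 0 \<noteq> {}\<close> show ?thesis
    by fastforce
qed

lemma grouped_instance_hitting_set:
  assumes "grouped_instance \<gamma> k m n A G"
  shows "\<exists>C\<subseteq>{..<m}. card C \<le> \<gamma> \<and> (\<forall>u<n. A u \<inter> C \<noteq> {})"
proof -
  from assms have groups: "\<forall>g<\<gamma>. G g \<noteq> {} \<and> cohesive A (G g)"
      and users: "(\<Union>g<\<gamma>. G g) = {..<n}" and approved: "\<forall>u<n. A u \<subseteq> {..<m}"
    unfolding grouped_instance_def by auto
  have "\<forall>g<\<gamma>. \<exists>x. \<forall>u\<in>G g. x \<in> A u"
    using groups unfolding cohesive_def by blast
  then obtain c where c: "\<forall>g<\<gamma>. \<forall>u\<in>G g. c g \<in> A u"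
    by metis
  define C where "C = c ` {..<\<gamma>}"
  have "C \<subseteq> {..<m}"
  proof
    fix x assume "x \<in> C"
    then obtain g u where "g < \<gamma>" "x = c g" "u \<in> G g"
      using groups unfolding C_def by blast
    then have "u < n" "x \<in> A u"
      using users c by auto
    then show "x \<in> {..<m}"
      using approved by blast
  qed
  moreover have "card C \<le> \<gamma>"
    unfolding C_def using card_image_le[of "{..<\<gamma>}" c] by simp
  moreover have "\<forall>u<n. A u \<inter> C \<noteq> {}"
  proof (intro allI impI)
    fix u assume "u < n"
    then obtain g where "g < \<gamma>" "u \<in> G g"
      using users by blast
    then have "c g \<in> A u \<inter> C"
      using c unfolding C_def by auto
    then show "A u \<inter> C \<noteq> {}"
      by blast
  qed
  ultimately show ?thesis
    by blast
qed

lemma exists_JR_committee_score_ge: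
  assumes "0 < \<gamma>" "\<gamma> < k" "\<And>i. 0 \<le> sc i" "grouped_instance \<gamma> k m n A G"
    and "S \<subseteq> {..<m}" "card S = k"
  shows "\<exists>T. satisfies_JR m n A k T \<and> (real k - real \<gamma>) * set_score sc S \<le> real k * set_score sc T"
proof -
  obtain Y where Y: "Y \<subseteq> S" "card Y = k - \<gamma>"
      and mean: "real (k - \<gamma>) * set_score sc S \<le> real k * set_score sc Y"
    using exists_subset_card_sum_ge[of S "k - \<gamma>" sc] assms(5,6) finite_subset
    unfolding set_score_def by auto
  obtain C where C: "C \<subseteq> {..<m}" "card C \<le> \<gamma>" "\<forall>u<n. A u \<inter> C \<noteq> {}"
    using grouped_instance_hitting_set[OF assms(4)] by blast
  have "card (C \<union> Y) \<le> k"
    using card_Un_le[of C Y] C(2) Y(2) assms(2) by linarith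
  moreover have "k \<le> m"
    using assms(4) unfolding grouped_instance_def by simp
  ultimately obtain T where T: "C \<union> Y \<subseteq> T" "T \<subseteq> {..<m}" "card T = k"
    using exists_subset_between[of "C \<union> Y" k "{..<m}"] C(1) Y(1) assms(5) by auto
  have JR: "satisfies_JR m n A k T"
  proof (rule satisfies_JR_if_meets_all_users)
    show "0 < n"
      using assms(4,1) by (rule grouped_instance_users_nonempty)
    show "A u \<inter> T \<noteq> {}" if "u < n" for u
      using C(3) T(1) that by blast
  qed (use assms(2) T in simp_all)
  have "(real k - real \<gamma>) * set_score sc S \<le> real k * set_score sc Y"
    using mean assms(2) by (simp add: of_nat_diff)
  also have "\<dots> \<le> real k * set_score sc T"
    unfolding set_score_def using assms(3) T finite_subset[OF T(2)]
    by (intro mult_left_mono sum_mono2) auto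
  finally show ?thesis
    using JR by blast
qed

lemma price_inst_le:
  assumes "0 < \<gamma>" "\<gamma> < k" "\<And>i. 0 \<le> sc i" "grouped_instance \<gamma> k m n A G"
  shows "price_inst sc m n A k \<le> real k / (real k - real \<gamma>)"
proof -
  have "k \<le> m"
    using assms(4) unfolding grouped_instance_def by simp
  then obtain S where S: "S \<subseteq> {..<m}" "card S = k" "opt_value sc m k = set_score sc S"
    by (rule opt_value_attained)
  obtain T where T: "satisfies_JR m n A k T"
      and score_T: "(real k - real \<gamma>) * set_score sc S \<le> real k * set_score sc T"
    using exists_JR_committee_score_ge[where sc=sc, OF assms S(1,2)] by blast
  have JR_value: "set_score sc T \<le> opt_JR_value sc m n A k"
    using T by (rule opt_JR_value_ge)
  have "(real k - real \<gamma>) * opt_value sc m k \<le> real k * set_score sc T"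
    using S(3) score_T by simp
  also have "\<dots> \<le> real k * opt_JR_value sc m n A k"
    using JR_value by (intro mult_left_mono) simp_all
  finally have "(real k - real \<gamma>) * opt_value sc m k \<le> real k * opt_JR_value sc m n A k" .
  moreover have "0 \<le> opt_JR_value sc m n A k"
    using JR_value sum_nonneg[of T sc] assms(3) unfolding set_score_def by force
  \<comment> \<open>if \<open>f(S\<^sup>*\<^sub>J\<^sub>R) = 0\<close> the price is \<open>0\<close>, as \<open>x / 0 = 0\<close>\<close>
  ultimately show ?thesis
    unfolding price_inst_def using assms(2)
    by (cases "opt_JR_value sc m n A k = 0") (simp_all add: divide_simps mult.commute)
qed

lemma price_inst_le_bound:
  assumes "0 < \<gamma>" "\<gamma> < k" "scoring_rule f" "grouped_instance \<gamma> k m n A G"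
  shows "price_inst (f m n A G) m n A k \<le> real k / (real k - real \<gamma>)"
  using assms unfolding scoring_rule_def by (intro price_inst_le) auto

lemma grouped_instance_singletons:
  "\<gamma> \<le> k \<Longrightarrow> grouped_instance \<gamma> k (k+\<gamma>) \<gamma> (\<lambda>u. {k+u}) (\<lambda>g. {g})"
  unfolding grouped_instance_def cohesive_def by auto

lemma price_k_le_bound:
  assumes "0 < \<gamma>" "\<gamma> < k" "scoring_rule f"
  shows "price_k \<gamma> k f \<le> real k / (real k - real \<gamma>)"
  unfolding price_k_def
proof (rule cSup_least)
  show "{price_inst (f m n A G) m n A k | m n A G. grouped_instance \<gamma> k m n A G} \<noteq> {}"
    using grouped_instance_singletons[of \<gamma> k] assms(2) by auto
qed (use price_inst_le_bound[OF assms] in blast)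

lemma price_k_eq_bound_if_attained:
  assumes "0 < \<gamma>" "\<gamma> < k" "scoring_rule f" "grouped_instance \<gamma> k m n A G"
    and "real k / (real k - real \<gamma>) \<le> price_inst (f m n A G) m n A k"
  shows "price_k \<gamma> k f = real k / (real k - real \<gamma>)"
proof (rule antisym)
  let ?prices = "{price_inst (f m n A G) m n A k | m n A G. grouped_instance \<gamma> k m n A G}"
  have "bdd_above ?prices"
    unfolding bdd_above_def using price_inst_le_bound[OF assms(1-3)]
    by (intro exI[of _ "real k / (real k - real \<gamma>)"]) blast
  then have "price_inst (f m n A G) m n A k \<le> price_k \<gamma> k f"
    unfolding price_k_def using assms(4) by (intro cSup_upper) auto
  then show "real k / (real k - real \<gamma>) \<le> price_k \<gamma> k f"
    using assms(5) by linarith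
qed (rule price_k_le_bound[OF assms(1-3)])

lemma set_score_if_contains_zero_items:
  assumes "T \<subseteq> {..<k+\<gamma>}" "card T = k" "{k..<k+\<gamma>} \<subseteq> T"
    and "\<And>i. i < k \<Longrightarrow> sc i = c" "\<And>i. k \<le> i \<Longrightarrow> i < k+\<gamma> \<Longrightarrow> sc i = 0"
  shows "set_score sc T = real (k - \<gamma>) * c"
proof -
  have T: "T = (T \<inter> {..<k}) \<union> {k..<k+\<gamma>}"
    using assms(1,3) by auto
  have "card T = card (T \<inter> {..<k}) + \<gamma>"
    by (subst T, subst card_Un_disjoint) auto
  then have "card (T \<inter> {..<k}) = k - \<gamma>"
    using assms(2) by simp
  moreover have "set_score sc T = sum sc (T \<inter> {..<k}) + sum sc {k..<k+\<gamma>}"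
    unfolding set_score_def by (subst T, subst sum.union_disjoint) auto
  ultimately show ?thesis
    using assms(4,5) by simp
qed

lemma price_inst_ge_if_JR_forces_zero_items:
  assumes "\<gamma> < k" "0 < n" "0 < c"
    and "\<And>i. i < k \<Longrightarrow> sc i = c" "\<And>i. k \<le> i \<Longrightarrow> i < k+\<gamma> \<Longrightarrow> sc i = 0"
    and "\<And>u. u < n \<Longrightarrow> A u \<inter> {k..<k+\<gamma>} \<noteq> {}"
    and "\<And>T. satisfies_JR (k+\<gamma>) n A k T \<Longrightarrow> {k..<k+\<gamma>} \<subseteq> T"
  shows "real k / (real k - real \<gamma>) \<le> price_inst sc (k+\<gamma>) n A k"
proof -
  let ?T = "{..<k-\<gamma>} \<union> {k..<k+\<gamma>}"
  have JR_score: "set_score sc T = real (k - \<gamma>) * c" if "satisfies_JR (k+\<gamma>) n A k T" for T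
    using that assms(4,5) assms(7)[OF that] unfolding satisfies_JR_def
    by (intro set_score_if_contains_zero_items) auto
  have "card ?T = k"
    using assms(1) by (subst card_Un_disjoint) auto
  have JR_T: "satisfies_JR (k+\<gamma>) n A k ?T"
  proof (rule satisfies_JR_if_meets_all_users)
    show "\<And>u. u < n \<Longrightarrow> A u \<inter> ?T \<noteq> {}"
      using assms(6) by blast
  qed (use assms(1,2) \<open>card ?T = k\<close> in auto)
  have "opt_JR_value sc (k+\<gamma>) n A k = set_score sc ?T"
    using JR_score JR_T by (intro opt_JR_value_eqI) simp_all
  also have "\<dots> = (real k - real \<gamma>) * c"
    using JR_score[OF JR_T] assms(1) by (simp add: of_nat_diff)
  finally have JR_value: "opt_JR_value sc (k+\<gamma>) n A k = (real k - real \<gamma>) * c" .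
  have "real k * c \<le> opt_value sc (k+\<gamma>) k"
    using opt_value_ge[of "{..<k}" "k+\<gamma>" k sc] assms(4) by (simp add: set_score_def)
  moreover have "0 < (real k - real \<gamma>) * c"
    using assms(1,3) by simp
  ultimately have "real k * c / ((real k - real \<gamma>) * c) \<le> price_inst sc (k+\<gamma>) n A k"
    unfolding price_inst_def JR_value by (intro divide_right_mono) simp_all
  then show ?thesis
    using assms(3) by simp
qed

lemma price_inst_first_k_ge:
  assumes "0 < \<gamma>" "\<gamma> < k"
  shows "real k / (real k - real \<gamma>) \<le> price_inst (\<lambda>i. if i < k then 1 else 0) (k+\<gamma>) \<gamma> (\<lambda>u. {k+u}) k"
proof (rule price_inst_ge_if_JR_forces_zero_items[where c=1])
  fix T
  assume JR: "satisfies_JR (k+\<gamma>) \<gamma> (\<lambda>u. {k+u}) k T"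
  show "{k..<k+\<gamma>} \<subseteq> T"
  proof
    fix x assume "x \<in> {k..<k+\<gamma>}"
    then show "x \<in> T"
      using assms(2) by (intro satisfies_JR_contains_sole_approved_item[OF JR, of "{x - k}"])
        (auto simp: cohesive_def)
  qed
qed (use assms in auto)

lemma f_DA_eqI:
  assumes "0 < \<gamma>" "\<And>g. g < \<gamma> \<Longrightarrow> real (card {u \<in> G g. i \<in> A u}) / real (card (G g)) = v"
  shows "f_DA \<gamma> m n A G i = v"
proof -
  have "(\<lambda>g. real (card {u \<in> G g. i \<in> A u}) / real (card (G g))) ` {..<\<gamma>} = (\<lambda>_. v) ` {..<\<gamma>}"
    using assms(2) by (intro image_cong) auto
  also have "\<dots> = {v}"
    using assms(1) by auto
  finally have "(\<lambda>g. real (card {u \<in> G g. i \<in> A u}) / real (card (G g))) ` {..<\<gamma>} = {v}" .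
  then show ?thesis
    unfolding f_DA_def by simp
qed

lemma f_DA_eq_0I:
  assumes "g < \<gamma>" "\<And>u. u \<in> G g \<Longrightarrow> i \<notin> A u"
  shows "f_DA \<gamma> m n A G i = 0"
  unfolding f_DA_def
proof (rule Min_eqI)
  have no_approvers: "{u \<in> G g. i \<in> A u} = {}"
    using assms(2) by blast
  have "real (card {u \<in> G g. i \<in> A u}) / real (card (G g)) = 0"
    unfolding no_approvers by simp
  then show "0 \<in> (\<lambda>g. real (card {u \<in> G g. i \<in> A u}) / real (card (G g))) ` {..<\<gamma>}"
    using assms(1) by (intro rev_image_eqI[of g]) simp_all
qed auto

lemma scoring_rule_f_DA: "0 < \<gamma> \<Longrightarrow> scoring_rule (f_DA \<gamma>)"
  unfolding scoring_rule_def f_DA_def by (intro allI, subst Min_ge_iff) auto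

definition da_group :: "nat \<Rightarrow> nat \<Rightarrow> nat set" where
  "da_group k g = {g*k..<g*k+k}"

text \<open>User \<open>u\<close> is member number \<open>u mod k\<close> of group \<open>u div k\<close>.\<close>

definition da_profile :: "nat \<Rightarrow> nat \<Rightarrow> nat \<Rightarrow> nat set" where
  "da_profile \<gamma> k u = (if u mod k < \<gamma> then {k + u div k} else insert (k + u div k) {..<k})"

lemma mem_da_group_iff:
  assumes "0 < k"
  shows "u \<in> da_group k g \<longleftrightarrow> u div k = g"
proof
  assume "u \<in> da_group k g"
  then show "u div k = g"
    unfolding da_group_def by (intro div_nat_eqI) (auto simp: mult.commute)
next
  assume "u div k = g"
  moreover have "u div k * k \<le> u" "u < u div k * k + k"
    using div_mult_mod_eq[of u k] mod_less_divisor[OF assms, of u] by linarith+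
  ultimately show "u \<in> da_group k g"
    unfolding da_group_def by auto
qed

lemma mod_eq_if_mem_da_group:
  assumes "u \<in> da_group k g"
  shows "u mod k = u - g*k"
  using assms unfolding da_group_def by (intro mod_nat_eqI) auto

lemma grouped_instance_da:
  assumes "\<gamma> < k"
  shows "grouped_instance \<gamma> k (k+\<gamma>) (\<gamma>*k) (da_profile \<gamma> k) (da_group k)"
  unfolding grouped_instance_def
proof (intro conjI allI impI)
  have k: "0 < k"
    using assms by simp
  show "k \<le> k + \<gamma>" by simp
  show "da_profile \<gamma> k u \<subseteq> {..<k+\<gamma>}" if "u < \<gamma>*k" for u
    using less_mult_imp_div_less[OF that] unfolding da_profile_def by auto
  show "da_group k g \<noteq> {}" for g
    using k unfolding da_group_def by simp
  show "cohesive (da_profile \<gamma> k) (da_group k g)" for g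
  proof -
    have "k + g \<in> (\<Inter>u\<in>da_group k g. da_profile \<gamma> k u)"
      using mem_da_group_iff[OF k] unfolding da_profile_def by auto
    then show ?thesis
      unfolding cohesive_def by blast
  qed
  show "da_group k g \<inter> da_group k h = {}" if "g \<noteq> h" for g h
    using that mem_da_group_iff[OF k] by auto
  show "(\<Union>g<\<gamma>. da_group k g) = {..<\<gamma>*k}"
    using mem_da_group_iff[OF k] div_less_iff_less_mult[OF k] by auto
qed

lemma f_DA_da_profile_below_k:
  assumes "0 < \<gamma>" "\<gamma> < k" "i < k"
  shows "f_DA \<gamma> (k+\<gamma>) (\<gamma>*k) (da_profile \<gamma> k) (da_group k) i = (real k - real \<gamma>) / real k"
proof (rule f_DA_eqI[OF assms(1)])
  fix g
  have "{u \<in> da_group k g. i \<in> da_profile \<gamma> k u} = {g*k+\<gamma>..<g*k+k}"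
  proof -
    have "i \<in> da_profile \<gamma> k u \<longleftrightarrow> \<gamma> \<le> u - g*k" if "u \<in> da_group k g" for u
      using assms(3) mod_eq_if_mem_da_group[OF that] unfolding da_profile_def by auto
    then show ?thesis
      unfolding da_group_def by auto
  qed
  then show "real (card {u \<in> da_group k g. i \<in> da_profile \<gamma> k u}) / real (card (da_group k g))
      = (real k - real \<gamma>) / real k"
    using assms(2) unfolding da_group_def by (simp add: of_nat_diff)
qed

lemma f_DA_da_profile_common_item:
  assumes "1 < \<gamma>" "\<gamma> < k" "h < \<gamma>"
  shows "f_DA \<gamma> (k+\<gamma>) (\<gamma>*k) (da_profile \<gamma> k) (da_group k) (k+h) = 0"
proof (rule f_DA_eq_0I)
  let ?g = "if h = 0 then 1 else 0"
  show "?g < \<gamma>"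
    using assms(1) by simp
  show "k + h \<notin> da_profile \<gamma> k u" if "u \<in> da_group k ?g" for u
    using that mem_da_group_iff[of k] assms(2) unfolding da_profile_def by (auto split: if_splits)
qed

lemma satisfies_JR_da_profile_contains_common_items:
  assumes "\<gamma> < k" "satisfies_JR (k+\<gamma>) (\<gamma>*k) (da_profile \<gamma> k) k T"
  shows "{k..<k+\<gamma>} \<subseteq> T"
proof
  fix x assume x: "x \<in> {k..<k+\<gamma>}"
  let ?h = "x - k"
  have k: "0 < k"
    using assms(1) by simp
  have sole: "da_profile \<gamma> k u = {x}" if "u \<in> {?h*k..<?h*k+\<gamma>}" for u
  proof -
    have "u \<in> da_group k ?h"
      using that assms(1) unfolding da_group_def by auto
    then show ?thesis
      using x that mem_da_group_iff[OF k] mod_eq_if_mem_da_group unfolding da_profile_def by auto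
  qed
  have "{?h*k..<?h*k+\<gamma>} \<subseteq> {..<\<gamma>*k}"
  proof -
    have "Suc ?h \<le> \<gamma>"
      using x by auto
    then have "Suc ?h * k \<le> \<gamma> * k"
      by (rule mult_le_mono1)
    moreover have "?h*k + \<gamma> \<le> ?h*k + k"
      using assms(1) by simp
    ultimately show ?thesis by auto
  qed
  moreover have "cohesive (da_profile \<gamma> k) {?h*k..<?h*k+\<gamma>}"
    using sole x unfolding cohesive_def by auto
  ultimately show "x \<in> T"
    using sole k by (intro satisfies_JR_contains_sole_approved_item[OF assms(2)]) auto
qed

lemma price_inst_f_DA_ge:
  assumes "1 < \<gamma>" "\<gamma> < k"
  shows "real k / (real k - real \<gamma>)
    \<le> price_inst (f_DA \<gamma> (k+\<gamma>) (\<gamma>*k) (da_profile \<gamma> k) (da_group k)) (k+\<gamma>) (\<gamma>*k) (da_profile \<gamma> k) k"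
proof (rule price_inst_ge_if_JR_forces_zero_items[where c="(real k - real \<gamma>) / real k"])
  have k: "0 < k"
    using assms by simp
  show "0 < \<gamma>*k" "0 < (real k - real \<gamma>) / real k"
    using assms by auto
  show "f_DA \<gamma> (k+\<gamma>) (\<gamma>*k) (da_profile \<gamma> k) (da_group k) i = (real k - real \<gamma>) / real k" if "i < k" for i
    using f_DA_da_profile_below_k assms that by simp
  show "f_DA \<gamma> (k+\<gamma>) (\<gamma>*k) (da_profile \<gamma> k) (da_group k) i = 0" if "k \<le> i" "i < k+\<gamma>" for i
    using f_DA_da_profile_common_item[OF assms, of "i - k"] that by simp
  show "da_profile \<gamma> k u \<inter> {k..<k+\<gamma>} \<noteq> {}" if "u < \<gamma>*k" for u
    using less_mult_imp_div_less[OF that] unfolding da_profile_def by auto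
  show "{k..<k+\<gamma>} \<subseteq> T" if "satisfies_JR (k+\<gamma>) (\<gamma>*k) (da_profile \<gamma> k) k T" for T
    using assms(2) that by (rule satisfies_JR_da_profile_contains_common_items)
qed (use assms in auto)

theorem theorem2:
  fixes k gamma :: nat
  assumes "k > 1" and "1 \<le> gamma" and "gamma < k"
  shows "(\<forall>f. scoring_rule f \<longrightarrow>
            (\<forall>m n A G. grouped_instance gamma k m n A G \<longrightarrow>
                price_inst (f m n A G) m n A k \<le> real k / (real k - real gamma))
            \<and> price_k gamma k f \<le> real k / (real k - real gamma))
       \<and> (\<exists>f. scoring_rule f \<and> price_k gamma k f = real k / (real k - real gamma))
       \<and> (gamma \<ge> 2 \<longrightarrow> price_k gamma k (f_DA gamma) = real k / (real k - real gamma))"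
proof -
  let ?bound = "real k / (real k - real gamma)"
  have gamma: "0 < gamma"
    using assms(2) by simp
  have scoring_rule_first_k: "scoring_rule (\<lambda>m n A G i. if i < k then 1 else 0)"
    unfolding scoring_rule_def by simp
  have "price_k gamma k (\<lambda>m n A G i. if i < k then 1 else 0) = ?bound"
    using price_inst_first_k_ge[OF gamma assms(3)] assms(3)
    by (intro price_k_eq_bound_if_attained[OF gamma assms(3) scoring_rule_first_k grouped_instance_singletons])
      simp_all
  moreover have "price_k gamma k (f_DA gamma) = ?bound" if "gamma \<ge> 2"
    using price_inst_f_DA_ge[of gamma k] that assms(3)
    by (intro price_k_eq_bound_if_attained[OF gamma assms(3) scoring_rule_f_DA[OF gamma]
        grouped_instance_da[OF assms(3)]]) simp
  ultimately show ?thesis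
    using price_inst_le_bound[OF gamma assms(3)] price_k_le_bound[OF gamma assms(3)] scoring_rule_first_k
    by blast
qed

end
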